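(* Assume the bounded-cost assumption and $J\ge2$. Suppose that for every $t\in[T]$ there is $\hat Z_t\in\mathcal Z$ with $\hat Z^j_t=\hat Z_t$ for all $j\in[J]$, and let $\underline L_T=\sum_{t=1}^T\mathbf 1\{\hat Z_t\ne Z_t\}$. If all agents use POMWU with learning rate $\eta^\star=\Theta\big(J^{-1/2}T^{-1/4}[\ln K(\underline L_T+m)]^{1/4}\big)$, then for every $j\in[J]$, $$\mathrm{Reg}^j_T=O\big([\ln K(\underline L_T+m)]^{3/4}T^{1/4}J^{1/2}\big).$$
   Context: Setting. There are $J$ agents indexed by $j\in[J]$. Agent $j$ has a finite action set $\mathcal A^j=\{a^j_1,\dots,a^j_K\}$ with $K$ elements; $\mathcal A=\prod_i\mathcal A^i$, $\mathcal A^{-j}=\prod_{i\ne j}\mathcal A^i$. $\Delta_K$ is the probability simplex in $\mathbb R^K$, $w\in\Delta_K$ identified with a distribution on $\mathcal A^j$. The context set $\mathcal Z=\{z_1,\dots,z_m\}\subset\mathbb R^d$ is finite with $m$ elements. Agent $j$ has $\phi^j:\mathcal A\to\mathbb R^d$ and cost $c^j(\mathbf w,Z)=\mathbb E_{\mathbf a\sim\mathbf w}[\langle\phi^j(\mathbf a),Z\rangle]$; $c^j(w,\mathbf w^{-j},Z)=c^j(w\otimes\mathbf w^{-j},Z)$. $\Phi^j(\mathbf w^{-j})\in\mathbb R^{d\times K}$ has entries $\Phi^j(\mathbf w^{-j})_{\ell,k}=\mathbb E_{\mathbf a^{-j}\sim\mathbf w^{-j}}[\phi^j(a^j_k,\mathbf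 a^{-j})[\ell]]$. Bounded-cost assumption: $|\langle Z,\phi^j(\mathbf a)\rangle|\le1$ for all $j,\mathbf a,Z$. Game protocol: $T$ rounds, fixed sequence $Z_1,\dots,Z_T\in\mathcal Z$; at round $t$ each agent $j$ receives a prediction $\hat Z^j_t\in\mathcal Z$, plays $w^j_t\in\Delta_K$, incurs $c^j(w^j_t,\mathbf w^{-j}_t,Z_t)$ with $\mathbf w^{-j}_t=\bigotimes_{i\ne j}w^i_t$, and observes $Z_t$ and $\Phi^j(\mathbf w^{-j}_t)$. Contextual external regret: $\mathrm{Reg}^j_T=\sum_{t=1}^Tc^j(w^j_t,\mathbf w^{-j}_t,Z_t)-\min_{\pi:\mathcal Z\to\Delta_K}\sum_{t=1}^Tc^j(\pi(Z_t),\mathbf w^{-j}_t,Z_t)$. POMWU with learning rate $\eta>0$ (for agent $j$): maintain for each $z\in\mathcal Z$ a vector $\rho_z\in\mathbb R^K_{>0}$, initialized to $(1/K,\dots,1/K)$, and a matrix $\Psi_z\in\mathbb R^{d\times K}$, initialized to $0$. At round $t$, with $\hat Z=\hat Z^j_t$, play $w^j_t[\ell]=\rho_{\hat Z}[\ell]\exp(-\eta(\Psi_{\hat Z}^\top\hat Z)[\ell])/\sum_{k=1}^K\rho_{\hat Z}[k]\exp(-\eta(\Psi_{\hat Z}^\top\hat Z)[k])$. After observing $Z_t$ and $\Phi_t=\Phi^j(\mathbf w^{-j}_t)$, set $\Psi_{Z_t}\leftarrow\Phi_t$ and $\rho_{Z_t}[\ell]\leftarrow\rho_{Z_t}[\ell]\exp(-\eta(\Phi_t^\top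 Z_t)[\ell])$ for all $\ell$. $O,\Theta$ hide absolute constants. *)

theory Defs
  imports Complex_Main "HOL-Library.FuncSet"
begin

text \<open>Agents are j < J, actions of each agent are k < K (action a^j_{k+1}
  is encoded as k). Vectors in R^d are functions nat => real, only coordinates < d matter.
  Rounds are t < T (round t+1 of the paper). A mixed strategy profile is
  ws :: nat => nat => real, ws i k = probability that agent i plays action k.\<close>

definition ip :: "nat \<Rightarrow> (nat \<Rightarrow> real) \<Rightarrow> (nat \<Rightarrow> real) \<Rightarrow> real" where
  "ip d x y = (\<Sum>l<d. x l * y l)"

definition simplex :: "nat \<Rightarrow> (nat \<Rightarrow> real) set" where
  "simplex K = {w. (\<forall>k<K. 0 \<le> w k) \<and> (\<Sum>k<K. w k) = 1}"

definition joint_actions :: "nat \<Rightarrow> nat \<Rightarrow> (nat \<Rightarrow> nat) set" where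
  "joint_actions J K = PiE {..<J} (\<lambda>_. {..<K})"

definition exp_cost :: "nat \<Rightarrow> nat \<Rightarrow> nat \<Rightarrow> (nat \<Rightarrow> (nat \<Rightarrow> nat) \<Rightarrow> nat \<Rightarrow> real)
    \<Rightarrow> nat \<Rightarrow> (nat \<Rightarrow> nat \<Rightarrow> real) \<Rightarrow> (nat \<Rightarrow> real) \<Rightarrow> real" where
  "exp_cost J K d \<phi> j ws Z =
     (\<Sum>a\<in>joint_actions J K. (\<Prod>i<J. ws i (a i)) * ip d (\<phi> j a) Z)"

text \<open>Column k of Phi^j(w^{-j}): E_{a^{-j}}[phi^j(a^j_k, a^{-j})] (a vector in R^d).\<close>
definition Phi :: "nat \<Rightarrow> nat \<Rightarrow> (nat \<Rightarrow> (nat \<Rightarrow> nat) \<Rightarrow> nat \<Rightarrow> real)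
    \<Rightarrow> nat \<Rightarrow> (nat \<Rightarrow> nat \<Rightarrow> real) \<Rightarrow> nat \<Rightarrow> nat \<Rightarrow> real" where
  "Phi J K \<phi> j ws k = (\<lambda>l. \<Sum>a\<in>PiE ({..<J} - {j}) (\<lambda>_. {..<K}).
       (\<Prod>i\<in>{..<J} - {j}. ws i (a i)) * \<phi> j (a(j := k)) l)"

definition pomwu_play :: "nat \<Rightarrow> nat \<Rightarrow> real \<Rightarrow> ((nat \<Rightarrow> real) \<Rightarrow> nat \<Rightarrow> real)
    \<Rightarrow> ((nat \<Rightarrow> real) \<Rightarrow> nat \<Rightarrow> nat \<Rightarrow> real) \<Rightarrow> (nat \<Rightarrow> real) \<Rightarrow> nat \<Rightarrow> real" where
  "pomwu_play K d \<eta> \<rho> \<Psi> zh = (\<lambda>l. if l < K then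
      \<rho> zh l * exp (- \<eta> * ip d (\<Psi> zh l) zh) /
        (\<Sum>k<K. \<rho> zh k * exp (- \<eta> * ip d (\<Psi> zh k) zh))
     else 0)"

text \<open>Joint state of all agents running POMWU with learning rate eta at the start of round t:
  for each agent j, rho j z and Psi j z (Psi j z k is column k of the d x K matrix).
  Zh j t is the prediction of agent j at round t, Zs t the realized context.\<close>
fun game_state :: "nat \<Rightarrow> nat \<Rightarrow> nat \<Rightarrow> (nat \<Rightarrow> (nat \<Rightarrow> nat) \<Rightarrow> nat \<Rightarrow> real) \<Rightarrow> real
    \<Rightarrow> (nat \<Rightarrow> nat \<Rightarrow> nat \<Rightarrow> real) \<Rightarrow> (nat \<Rightarrow> nat \<Rightarrow> real) \<Rightarrow> nat
    \<Rightarrow> (nat \<Rightarrow> (nat \<Rightarrow> real) \<Rightarrow> nat \<Rightarrow> real) \<times> (nat \<Rightarrow> (nat \<Rightarrow> real) \<Rightarrow> nat \<Rightarrow> nat \<Rightarrow> real)" where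
  "game_state J K d \<phi> \<eta> Zh Zs 0 = ((\<lambda>j z l. 1 / real K), (\<lambda>j z k l. 0))"
| "game_state J K d \<phi> \<eta> Zh Zs (Suc t) =
     (case game_state J K d \<phi> \<eta> Zh Zs t of (\<rho>, \<Psi>) \<Rightarrow>
       (let ws = (\<lambda>j. pomwu_play K d \<eta> (\<rho> j) (\<Psi> j) (Zh j t))
        in ((\<lambda>j z l. if z = Zs t then \<rho> j z l * exp (- \<eta> * ip d (Phi J K \<phi> j ws l) z)
                     else \<rho> j z l),
            (\<lambda>j z. if z = Zs t then Phi J K \<phi> j ws else \<Psi> j z))))"

definition game_play :: "nat \<Rightarrow> nat \<Rightarrow> nat \<Rightarrow> (nat \<Rightarrow> (nat \<Rightarrow> nat) \<Rightarrow> nat \<Rightarrow> real) \<Rightarrow> real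
    \<Rightarrow> (nat \<Rightarrow> nat \<Rightarrow> nat \<Rightarrow> real) \<Rightarrow> (nat \<Rightarrow> nat \<Rightarrow> real) \<Rightarrow> nat \<Rightarrow> nat \<Rightarrow> nat \<Rightarrow> real" where
  "game_play J K d \<phi> \<eta> Zh Zs t =
     (case game_state J K d \<phi> \<eta> Zh Zs t of (\<rho>, \<Psi>) \<Rightarrow>
        (\<lambda>j. pomwu_play K d \<eta> (\<rho> j) (\<Psi> j) (Zh j t)))"

definition ctx_regret :: "nat \<Rightarrow> nat \<Rightarrow> nat \<Rightarrow> (nat \<Rightarrow> (nat \<Rightarrow> nat) \<Rightarrow> nat \<Rightarrow> real)
    \<Rightarrow> (nat \<Rightarrow> real) set \<Rightarrow> (nat \<Rightarrow> nat \<Rightarrow> real) \<Rightarrow> nat \<Rightarrow> (nat \<Rightarrow> nat \<Rightarrow> nat \<Rightarrow> real)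
    \<Rightarrow> nat \<Rightarrow> real" where
  "ctx_regret J K d \<phi> Ctx Zs T ws j =
     (\<Sum>t<T. exp_cost J K d \<phi> j (ws t) (Zs t))
     - Inf {(\<Sum>t<T. exp_cost J K d \<phi> j ((ws t)(j := \<pi> (Zs t))) (Zs t)) | \<pi>.
              \<forall>z\<in>Ctx. \<pi> z \<in> simplex K}"

end

theory Submission
  imports Defs
begin

text \<open>Each context runs its own instance of optimistic multiplicative weights whose hint is the
  loss vector seen at the previous visit of that context, so the potential argument bounds the
  regret on a context by \<open>ln K / \<eta> + \<eta> \<Sigma>\<^sub>t \<parallel>loss\<^sub>t - hint\<^sub>t\<parallel>\<^sup>2\<^sub>\<infinity>\<close>. If the context was predicted
  correctly both now and at its previous visit, every agent plays Gibbs distributions of the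
  same weights whose exponents differ by \<open>O(\<eta>)\<close>, and since expected losses are multilinear in
  the opponents' strategies the hint error is \<open>O(\<eta> J)\<close>. The remaining at most \<open>m + 2L\<close> rounds
  have hint error at most 2, and a wrong prediction costs at most 2. Altogether the regret is at
  most \<open>m ln K / \<eta> + \<eta> (576 \<eta>\<^sup>2 J\<^sup>2 T + 4 (m + 2L)) + 2L\<close>, which the choice of \<open>\<eta>\<close> balances.\<close>

lemma exp_le_one_plus_quadratic:
  fixes y :: real
  assumes "\<bar>y\<bar> \<le> 1"
  shows "exp y \<le> 1 + y + y\<^sup>2"
proof (cases "y \<ge> 0")
  case True
  then show ?thesis using exp_bound[of y] assms by auto
next
  case False
  define u where "u = - y"
  have u: "0 \<le> u" "u \<le> 1" using False assms by (auto simp: u_def)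
  have "exp y = 1 / exp u" by (simp add: u_def exp_minus field_simps)
  also have "\<dots> \<le> 1 / (1 + u)"
    using exp_ge_add_one_self[of u] u by (intro divide_left_mono) auto
  also have "\<dots> \<le> 1 - u + u\<^sup>2"
  proof -
    have "1 \<le> (1 - u + u\<^sup>2) * (1 + u)"
      using u by (simp add: algebra_simps power2_eq_square power3_eq_cube)
    then show ?thesis using u by (simp add: field_simps)
  qed
  finally show ?thesis by (simp add: u_def)
qed

lemma sq_le_of_le_double_exp_minus_one:
  fixes e x :: real
  assumes "0 \<le> x" "0 \<le> e" "e \<le> 2" "e \<le> 2 * (exp x - 1)"
  shows "e\<^sup>2 \<le> 16 * x\<^sup>2"
proof (cases "x \<le> 1")
  case True
  have "exp x \<le> 1 + x + x\<^sup>2" using exp_le_one_plus_quadratic[of x] True assms(1) by simp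
  moreover have "x\<^sup>2 \<le> x" using True assms(1) by (simp add: power2_eq_square mult_left_le)
  ultimately have "e \<le> 4 * x" using assms(4) by (simp add: algebra_simps)
  then have "e\<^sup>2 \<le> (4 * x)\<^sup>2" using assms(2) by (intro power_mono) auto
  then show ?thesis by (simp add: power_mult_distrib)
next
  case False
  have "e\<^sup>2 \<le> 2\<^sup>2" using assms(2,3) by (intro power_mono) auto
  moreover have "1 \<le> x\<^sup>2" using False by (simp add: one_le_power)
  ultimately show ?thesis by simp
qed

section \<open>Gibbs distributions\<close>

definition softmax :: "nat \<Rightarrow> (nat \<Rightarrow> real) \<Rightarrow> (nat \<Rightarrow> real) \<Rightarrow> nat \<Rightarrow> real" where
  "softmax K \<rho> x k = \<rho> k * exp (- x k) / (\<Sum>i<K. \<rho> i * exp (- x i))"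

lemma sum_weighted_exp_pos:
  fixes \<rho> x :: "nat \<Rightarrow> real"
  assumes "K \<ge> 1" "\<forall>k<K. \<rho> k > 0"
  shows "(\<Sum>k<K. \<rho> k * exp (x k)) > 0"
  using assms by (intro sum_pos) (auto simp: lessThan_empty_iff)

lemma softmax_mult_exp:
  "softmax K (\<lambda>k. \<rho> k * exp (- y k)) x = softmax K \<rho> (\<lambda>k. y k + x k)"
  by (simp add: softmax_def fun_eq_iff mult.assoc flip: exp_add)

lemma softmax_pos:
  assumes "K \<ge> 1" "\<forall>k<K. \<rho> k > 0" "k < K"
  shows "softmax K \<rho> x k > 0"
  using assms sum_weighted_exp_pos[OF assms(1,2), of "\<lambda>k. - x k"] by (simp add: softmax_def)

lemma sum_softmax:
  assumes "K \<ge> 1" "\<forall>k<K. \<rho> k > 0"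
  shows "(\<Sum>k<K. softmax K \<rho> x k) = 1"
  using sum_weighted_exp_pos[OF assms, of "\<lambda>k. - x k"]
  by (simp add: softmax_def sum_divide_distrib[symmetric])

text \<open>Gibbs' variational principle: the log-partition function is at most the mean potential
  under the Gibbs distribution, because the relative entropy of that distribution to
  \<open>\<rho>\<close> is nonnegative.\<close>
lemma ln_partition_le:
  fixes \<rho> x :: "nat \<Rightarrow> real"
  assumes K: "K \<ge> 1" and pos: "\<forall>k<K. \<rho> k > 0"
  shows "ln (\<Sum>k<K. \<rho> k * exp (- x k)) \<le> ln (\<Sum>k<K. \<rho> k) - (\<Sum>k<K. softmax K \<rho> x k * x k)"
proof -
  define S where "S = (\<Sum>k<K. \<rho> k)"
  define Q where "Q = (\<Sum>k<K. \<rho> k * exp (- x k))"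
  define v where "v = softmax K \<rho> x"
  have S0: "S > 0" unfolding S_def using pos K by (intro sum_pos) (auto simp: lessThan_empty_iff)
  have Q0: "Q > 0" unfolding Q_def using sum_weighted_exp_pos[OF K pos] .
  have "v k * (ln (Q / S) + x k) \<le> \<rho> k / S - v k" if k: "k < K" for k
  proof -
    have "ln (Q / S * exp (x k)) \<le> Q / S * exp (x k) - 1"
      using Q0 S0 by (intro ln_le_minus_one) auto
    moreover have "ln (Q / S * exp (x k)) = ln (Q / S) + x k"
      using Q0 S0 by (subst ln_mult) auto
    ultimately have "v k * (ln (Q / S) + x k) \<le> v k * (Q / S * exp (x k) - 1)"
      using softmax_pos[OF K pos k] by (intro mult_left_mono) (auto simp: v_def less_imp_le)
    also have "\<dots> = \<rho> k / S - v k"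
      using Q0 S0 by (simp add: v_def softmax_def Q_def[symmetric] field_simps mult_exp_exp)
    finally show ?thesis .
  qed
  then have "(\<Sum>k<K. v k * (ln (Q / S) + x k)) \<le> (\<Sum>k<K. \<rho> k / S - v k)"
    by (intro sum_mono) auto
  also have "\<dots> = 0"
    using S0 sum_softmax[OF K pos] by (simp add: v_def sum_subtractf S_def sum_divide_distrib[symmetric])
  finally have "ln (Q / S) + (\<Sum>k<K. v k * x k) \<le> 0"
    using sum_softmax[OF K pos]
    by (simp add: v_def distrib_left sum.distrib sum_distrib_right[symmetric])
  then show ?thesis using Q0 S0 by (simp add: Q_def S_def v_def ln_div)
qed

lemma ln_mean_exp_le:
  fixes v y :: "nat \<Rightarrow> real"
  assumes v: "\<forall>k<K. v k \<ge> 0" "(\<Sum>k<K. v k) = 1"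
    and y: "\<forall>k<K. \<bar>y k\<bar> \<le> \<delta>" and \<delta>: "\<delta> \<le> 1"
  shows "ln (\<Sum>k<K. v k * exp (- y k)) \<le> - (\<Sum>k<K. v k * y k) + \<delta>\<^sup>2"
proof -
  have "v k * exp (- y k) \<le> v k * (1 - y k + \<delta>\<^sup>2)" if k: "k < K" for k
  proof -
    have "\<bar>y k\<bar> \<le> \<delta>" using y k by auto
    then have "(y k)\<^sup>2 \<le> \<delta>\<^sup>2" by (metis abs_ge_zero power2_abs power_mono)
    then have "exp (- y k) \<le> 1 - y k + \<delta>\<^sup>2"
      using exp_le_one_plus_quadratic[of "- y k"] \<open>\<bar>y k\<bar> \<le> \<delta>\<close> \<delta> by simp
    then show ?thesis using v k by (intro mult_left_mono) auto
  qed
  then have "(\<Sum>k<K. v k * exp (- y k)) \<le> (\<Sum>k<K. v k * (1 - y k + \<delta>\<^sup>2))"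
    by (intro sum_mono) auto
  also have "\<dots> = 1 - (\<Sum>k<K. v k * y k) + \<delta>\<^sup>2"
    using v(2) by (simp add: algebra_simps sum.distrib sum_subtractf sum_distrib_right[symmetric])
  finally have le: "(\<Sum>k<K. v k * exp (- y k)) \<le> 1 - (\<Sum>k<K. v k * y k) + \<delta>\<^sup>2" .
  have pos: "(\<Sum>k<K. v k * exp (- y k)) > 0"
  proof -
    obtain k where "k < K" "v k > 0"
      using v by (metis lessThan_iff order_le_less sum.neutral zero_neq_one)
    then show ?thesis using v by (intro sum_pos2[of _ k]) auto
  qed
  show ?thesis using ln_le_minus_one[OF pos] le by linarith
qed

text \<open>Factoring out the Gibbs distribution of the hint \<open>h\<close> splits the potential into a part
  bounded by Gibbs' variational principle and a part bounded by the quadratic bound on \<open>exp\<close>.\<close>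
lemma ln_sum_weights_step_le:
  fixes \<rho> c h :: "nat \<Rightarrow> real"
  assumes K: "K \<ge> 1" and pos: "\<forall>k<K. \<rho> k > 0"
    and err: "\<forall>k<K. \<bar>c k - h k\<bar> \<le> \<delta>" and \<eta>: "0 \<le> \<eta>" "\<eta> * \<delta> \<le> 1"
  shows "ln (\<Sum>k<K. \<rho> k * exp (- \<eta> * c k))
    \<le> ln (\<Sum>k<K. \<rho> k) - \<eta> * (\<Sum>k<K. softmax K \<rho> (\<lambda>k. \<eta> * h k) k * c k) + \<eta>\<^sup>2 * \<delta>\<^sup>2"
proof -
  define Q where "Q = (\<Sum>k<K. \<rho> k * exp (- (\<eta> * h k)))"
  define v where "v = softmax K \<rho> (\<lambda>k. \<eta> * h k)"
  define y where "y k = \<eta> * (c k - h k)" for k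
  have Q0: "Q > 0" unfolding Q_def using sum_weighted_exp_pos[OF K pos] .
  have "\<rho> k * exp (- \<eta> * c k) = Q * (v k * exp (- y k))" if "k < K" for k
    using Q0 by (simp add: v_def y_def softmax_def Q_def[symmetric] algebra_simps flip: exp_add)
  then have split: "(\<Sum>k<K. \<rho> k * exp (- \<eta> * c k)) = Q * (\<Sum>k<K. v k * exp (- y k))"
    by (simp add: sum_distrib_left)
  have v: "\<forall>k<K. v k \<ge> 0" "(\<Sum>k<K. v k) = 1"
    using softmax_pos[OF K pos] sum_softmax[OF K pos] by (auto simp: v_def less_imp_le)
  have y: "\<forall>k<K. \<bar>y k\<bar> \<le> \<eta> * \<delta>"
    using err \<eta>(1) by (auto simp: y_def abs_mult intro: mult_left_mono)
  have "(\<Sum>k<K. v k * exp (- y k)) > 0"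
    using Q0 split sum_weighted_exp_pos[OF K pos, of "\<lambda>k. - \<eta> * c k"] by (simp add: zero_less_mult_iff)
  then have "ln (\<Sum>k<K. \<rho> k * exp (- \<eta> * c k)) = ln Q + ln (\<Sum>k<K. v k * exp (- y k))"
    using Q0 unfolding split by (simp add: ln_mult)
  also have "\<dots> \<le> (ln (\<Sum>k<K. \<rho> k) - (\<Sum>k<K. v k * (\<eta> * h k)))
      + (- (\<Sum>k<K. v k * y k) + (\<eta> * \<delta>)\<^sup>2)"
    using ln_partition_le[OF K pos, of "\<lambda>k. \<eta> * h k"] ln_mean_exp_le[OF v y \<eta>(2)]
    by (simp add: Q_def v_def)
  also have "\<dots> = ln (\<Sum>k<K. \<rho> k) - \<eta> * (\<Sum>k<K. v k * c k) + \<eta>\<^sup>2 * \<delta>\<^sup>2"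
    by (simp add: y_def algebra_simps sum_subtractf sum_distrib_left power_mult_distrib)
  finally show ?thesis by (simp add: v_def)
qed

lemma softmax_le_exp_mult:
  fixes \<rho> x y :: "nat \<Rightarrow> real"
  assumes K: "K \<ge> 1" and pos: "\<forall>k<K. \<rho> k > 0" and xy: "\<forall>k<K. \<bar>x k - y k\<bar> \<le> a" and k: "k < K"
  shows "softmax K \<rho> x k \<le> exp (2 * a) * softmax K \<rho> y k"
proof -
  have X0: "(\<Sum>i<K. \<rho> i * exp (- x i)) > 0" and Y0: "(\<Sum>i<K. \<rho> i * exp (- y i)) > 0"
    using sum_weighted_exp_pos[OF K pos] by auto
  have exp_le: "\<rho> i * exp (- u i) \<le> exp a * (\<rho> i * exp (- w i))"
    if "i < K" "\<bar>u i - w i\<bar> \<le> a" for i and u w :: "nat \<Rightarrow> real"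
  proof -
    have "exp (- u i) \<le> exp a * exp (- w i)" using that(2) by (simp add: abs_le_iff flip: exp_add)
    then show ?thesis using pos that(1) by (simp add: mult.left_commute)
  qed
  have num: "\<rho> k * exp (- x k) \<le> exp a * (\<rho> k * exp (- y k))"
    using exp_le[of k x y] xy k by auto
  have den: "(\<Sum>i<K. \<rho> i * exp (- y i)) \<le> exp a * (\<Sum>i<K. \<rho> i * exp (- x i))"
    unfolding sum_distrib_left using exp_le[of _ y x] xy by (intro sum_mono) (auto simp: abs_minus_commute)
  have "softmax K \<rho> x k \<le> exp a * (\<rho> k * exp (- y k)) / (\<Sum>i<K. \<rho> i * exp (- x i))"
    unfolding softmax_def using num X0 by (intro divide_right_mono) auto
  also have "\<dots> \<le> exp a * (\<rho> k * exp (- y k)) / ((\<Sum>i<K. \<rho> i * exp (- y i)) / exp a)"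
    using den X0 Y0 pos k by (intro divide_left_mono) (auto simp: field_simps)
  also have "\<dots> = exp (2 * a) * softmax K \<rho> y k"
    by (simp add: softmax_def field_simps mult_exp_exp)
  finally show ?thesis .
qed

lemma pomwu_play_eq_softmax:
  "k < K \<Longrightarrow> pomwu_play K d \<eta> \<rho> \<Psi> zh k = softmax K (\<rho> zh) (\<lambda>i. \<eta> * ip d (\<Psi> zh i) zh) k"
  by (simp add: pomwu_play_def softmax_def)

lemma pomwu_play_in_simplex:
  assumes "K \<ge> 1" "\<forall>k<K. \<rho> zh k > 0"
  shows "pomwu_play K d \<eta> \<rho> \<Psi> zh \<in> simplex K"
  using softmax_pos[OF assms] sum_softmax[OF assms]
  by (simp add: simplex_def pomwu_play_eq_softmax less_imp_le)

lemma abs_sum_simplex_le_1: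
  assumes "w \<in> simplex K" "\<forall>k<K. \<bar>c k\<bar> \<le> 1"
  shows "\<bar>\<Sum>k<K. w k * c k\<bar> \<le> 1"
proof -
  have "\<bar>\<Sum>k<K. w k * c k\<bar> \<le> (\<Sum>k<K. \<bar>w k * c k\<bar>)" by (rule sum_abs)
  also have "\<dots> \<le> (\<Sum>k<K. w k)"
    using assms by (intro sum_mono) (auto simp: simplex_def abs_mult mult_left_le)
  also have "\<dots> = 1" using assms by (simp add: simplex_def)
  finally show ?thesis .
qed

section \<open>Expected losses\<close>

lemma ip_commute: "ip d x y = ip d y x"
  by (simp add: ip_def mult.commute)

lemma ip_Phi_eq:
  "ip d (Phi J K \<phi> j ws k) z = (\<Sum>a\<in>PiE ({..<J} - {j}) (\<lambda>_. {..<K}).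
       (\<Prod>i\<in>{..<J} - {j}. ws i (a i)) * ip d (\<phi> j (a(j := k))) z)"
  unfolding ip_def Phi_def
  by (simp add: sum_distrib_right sum_distrib_left mult.assoc sum.swap[of _ "{..<d}"])

lemma exp_cost_fun_upd:
  assumes j: "j < J"
  shows "exp_cost J K d \<phi> j (ws(j := w)) Z = (\<Sum>k<K. w k * ip d (Phi J K \<phi> j ws k) Z)"
proof -
  define S where "S = {..<J} - {j}"
  have jS: "j \<notin> S" and fS: "finite S" and iS: "insert j S = {..<J}" using j by (auto simp: S_def)
  have actions: "joint_actions J K = (\<lambda>(y, g). g(j := y)) ` ({..<K} \<times> PiE S (\<lambda>_. {..<K}))"
    unfolding joint_actions_def iS[symmetric] by (rule PiE_insert_eq)
  have inj: "inj_on (\<lambda>(y, g). g(j := y)) ({..<K} \<times> PiE S (\<lambda>_. {..<K}))"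
    using inj_combinator[OF jS, of "\<lambda>_. {..<K}"] by simp
  have prob: "(\<Prod>i<J. (ws(j := w)) i ((g(j := y)) i)) = w y * (\<Prod>i\<in>S. ws i (g i))" for y g
  proof -
    have "(\<Prod>i<J. (ws(j := w)) i ((g(j := y)) i)) = w y * (\<Prod>i\<in>S. (ws(j := w)) i ((g(j := y)) i))"
      using jS fS by (simp flip: iS)
    also have "(\<Prod>i\<in>S. (ws(j := w)) i ((g(j := y)) i)) = (\<Prod>i\<in>S. ws i (g i))"
      using jS by (intro prod.cong) auto
    finally show ?thesis .
  qed
  have "exp_cost J K d \<phi> j (ws(j := w)) Z =
     (\<Sum>(y, g)\<in>{..<K} \<times> PiE S (\<lambda>_. {..<K}).
        (\<Prod>i<J. (ws(j := w)) i ((g(j := y)) i)) * ip d (\<phi> j (g(j := y))) Z)"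
    unfolding exp_cost_def actions by (subst sum.reindex[OF inj]) (simp add: case_prod_unfold)
  also have "\<dots> =
     (\<Sum>y<K. \<Sum>g\<in>PiE S (\<lambda>_. {..<K}). w y * ((\<Prod>i\<in>S. ws i (g i)) * ip d (\<phi> j (g(j := y))) Z))"
    by (subst sum.cartesian_product) (simp only: prob mult.assoc)
  also have "\<dots> = (\<Sum>k<K. w k * ip d (Phi J K \<phi> j ws k) Z)"
    unfolding ip_Phi_eq S_def[symmetric] by (simp add: sum_distrib_left)
  finally show ?thesis .
qed

lemma sum_prod_PiE_simplex:
  assumes "finite S" "\<forall>i\<in>S. ws i \<in> simplex K"
  shows "(\<Sum>a\<in>PiE S (\<lambda>_. {..<K}). \<Prod>i\<in>S. ws i (a i)) = 1"
  using assms by (simp add: prod_sum_PiE[symmetric] simplex_def)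

lemma prod_PiE_simplex_nonneg:
  assumes "\<forall>i\<in>S. ws i \<in> simplex K" "a \<in> PiE S (\<lambda>_. {..<K})"
  shows "(\<Prod>i\<in>S. ws i (a i)) \<ge> 0"
  using assms by (intro prod_nonneg) (auto simp: simplex_def PiE_iff)

lemma fun_upd_in_joint_actions:
  assumes "j < J" "k < K" "a \<in> PiE ({..<J} - {j}) (\<lambda>_. {..<K})"
  shows "a(j := k) \<in> joint_actions J K"
  using assms unfolding joint_actions_def PiE_iff by (auto simp: extensional_def)

locale bounded_costs =
  fixes J K d :: nat and \<phi> :: "nat \<Rightarrow> (nat \<Rightarrow> nat) \<Rightarrow> nat \<Rightarrow> real" and Ctx :: "(nat \<Rightarrow> real) set"
  assumes bounded: "\<forall>j<J. \<forall>a\<in>joint_actions J K. \<forall>z\<in>Ctx. \<bar>ip d z (\<phi> j a)\<bar> \<le> 1"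
begin

lemma abs_ip_deviation_le_1:
  assumes "j < J" "k < K" "z \<in> Ctx" "a \<in> PiE ({..<J} - {j}) (\<lambda>_. {..<K})"
  shows "\<bar>ip d (\<phi> j (a(j := k))) z\<bar> \<le> 1"
  using bounded assms fun_upd_in_joint_actions[OF assms(1,2,4)] by (simp add: ip_commute)

lemma abs_ip_Phi_le_1:
  assumes j: "j < J" and k: "k < K" and z: "z \<in> Ctx"
    and ws: "\<forall>i\<in>{..<J} - {j}. ws i \<in> simplex K"
  shows "\<bar>ip d (Phi J K \<phi> j ws k) z\<bar> \<le> 1"
proof -
  let ?A = "PiE ({..<J} - {j}) (\<lambda>_. {..<K})"
  let ?P = "\<lambda>a. \<Prod>i\<in>{..<J} - {j}. ws i (a i)"
  have "\<bar>ip d (Phi J K \<phi> j ws k) z\<bar> \<le> (\<Sum>a\<in>?A. \<bar>?P a * ip d (\<phi> j (a(j := k))) z\<bar>)"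
    unfolding ip_Phi_eq by (rule sum_abs)
  also have "\<dots> \<le> (\<Sum>a\<in>?A. ?P a)"
    using abs_ip_deviation_le_1[OF j k z] prod_PiE_simplex_nonneg[OF ws]
    by (intro sum_mono) (simp add: abs_mult mult_left_le)
  also have "\<dots> = 1" using ws by (intro sum_prod_PiE_simplex) auto
  finally show ?thesis .
qed

text \<open>Expected losses are multilinear in the opponents' strategies, so perturbing each of the
  at most \<open>J\<close> opponent strategies by a factor within \<open>[e\<^sup>-\<^sup>b, e\<^sup>b]\<close> changes them by at most
  \<open>2 (e\<^sup>b\<^sup>J - 1)\<close>.\<close>
lemma abs_ip_Phi_diff_le:
  assumes j: "j < J" and k: "k < K" and z: "z \<in> Ctx" and b: "b \<ge> 0"
    and ws: "\<forall>i\<in>{..<J} - {j}. ws i \<in> simplex K"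
    and ws': "\<forall>i\<in>{..<J} - {j}. ws' i \<in> simplex K"
    and le: "\<forall>i\<in>{..<J} - {j}. \<forall>k<K. ws i k \<le> exp b * ws' i k"
    and le': "\<forall>i\<in>{..<J} - {j}. \<forall>k<K. ws' i k \<le> exp b * ws i k"
  shows "\<bar>ip d (Phi J K \<phi> j ws k) z - ip d (Phi J K \<phi> j ws' k) z\<bar> \<le> 2 * (exp (b * real J) - 1)"
proof -
  define S where "S = {..<J} - {j}"
  let ?A = "PiE S (\<lambda>_. {..<K})"
  define P where "P a = (\<Prod>i\<in>S. ws i (a i))" for a
  define P' where "P' a = (\<Prod>i\<in>S. ws' i (a i))" for a
  define E where "E = exp b ^ card S"
  have E1: "E \<ge> 1" using b by (simp add: E_def one_le_power)
  have EJ: "E \<le> exp (b * real J)"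
  proof -
    have "card S \<le> J" by (metis S_def Diff_subset card_lessThan card_mono finite_lessThan)
    then have "real (card S) * b \<le> real J * b" using b by (intro mult_right_mono) auto
    then show ?thesis by (simp add: E_def mult.commute flip: exp_of_nat_mult)
  qed
  have P_diff: "\<bar>P a - P' a\<bar> \<le> (E - 1) * (P a + P' a)" if a: "a \<in> ?A" for a
  proof -
    have "P a \<le> (\<Prod>i\<in>S. exp b * ws' i (a i))" unfolding P_def
      using a ws le by (intro prod_mono) (auto simp: S_def simplex_def PiE_iff)
    then have "P a \<le> E * P' a" by (simp add: prod.distrib E_def P'_def)
    moreover have "P' a \<le> (\<Prod>i\<in>S. exp b * ws i (a i))" unfolding P'_def
      using a ws' le' by (intro prod_mono) (auto simp: S_def simplex_def PiE_iff)
    then have "P' a \<le> E * P a" by (simp add: prod.distrib E_def P_def)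
    moreover have "P a \<ge> 0" "P' a \<ge> 0"
      using prod_PiE_simplex_nonneg a ws ws' by (auto simp: P_def P'_def S_def)
    then have "P a \<le> E * P a" "P' a \<le> E * P' a"
      using E1 by (simp_all add: mult_le_cancel_right1)
    ultimately show ?thesis unfolding abs_le_iff left_diff_distrib distrib_left by linarith
  qed
  have "\<bar>ip d (Phi J K \<phi> j ws k) z - ip d (Phi J K \<phi> j ws' k) z\<bar>
      = \<bar>\<Sum>a\<in>?A. (P a - P' a) * ip d (\<phi> j (a(j := k))) z\<bar>"
    unfolding ip_Phi_eq S_def[symmetric] P_def P'_def by (simp add: sum_subtractf left_diff_distrib)
  also have "\<dots> \<le> (\<Sum>a\<in>?A. (E - 1) * (P a + P' a))"
  proof (rule order_trans[OF sum_abs sum_mono])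
    fix a assume a: "a \<in> ?A"
    have "\<bar>ip d (\<phi> j (a(j := k))) z\<bar> \<le> 1"
      using abs_ip_deviation_le_1[OF j k z] a by (simp add: S_def)
    then have "\<bar>(P a - P' a) * ip d (\<phi> j (a(j := k))) z\<bar> \<le> \<bar>P a - P' a\<bar>"
      by (simp add: abs_mult mult_left_le)
    then show "\<bar>(P a - P' a) * ip d (\<phi> j (a(j := k))) z\<bar> \<le> (E - 1) * (P a + P' a)"
      using P_diff[OF a] by linarith
  qed
  also have "\<dots> = 2 * (E - 1)"
    using sum_prod_PiE_simplex[of S ws K] sum_prod_PiE_simplex[of S ws' K] ws ws'
    by (simp add: S_def P_def P'_def sum.distrib flip: sum_distrib_left)
  finally show ?thesis using EJ by simp
qed

end

section \<open>Visits of contexts\<close>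

definition previous_visit :: "(nat \<Rightarrow> 'a) \<Rightarrow> nat \<Rightarrow> nat \<Rightarrow> bool" where
  "previous_visit Zs p t \<longleftrightarrow> p < t \<and> Zs p = Zs t \<and> (\<forall>s. p < s \<and> s < t \<longrightarrow> Zs s \<noteq> Zs t)"

text \<open>Round \<open>t\<close> is prepared if its context was predicted correctly both now and at the
  previous visit of the same context; only then is the hint stored for it accurate.\<close>
definition prepared_round :: "(nat \<Rightarrow> 'a) \<Rightarrow> (nat \<Rightarrow> 'a) \<Rightarrow> nat \<Rightarrow> bool" where
  "prepared_round Zs Zhat t \<longleftrightarrow> Zhat t = Zs t \<and> (\<exists>p. previous_visit Zs p t \<and> Zhat p = Zs p)"

lemma previous_visit_exists:
  assumes "p < t" "Zs p = Zs t"
  shows "\<exists>q. previous_visit Zs q t"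
proof -
  define Q where "Q = {q. q < t \<and> Zs q = Zs t}"
  have "finite Q" "p \<in> Q" using assms by (auto simp: Q_def)
  then have "Max Q \<in> Q" "\<forall>s\<in>Q. s \<le> Max Q" by (auto intro: Max_in)
  then have "previous_visit Zs (Max Q) t"
    unfolding previous_visit_def Q_def by (auto simp: not_le[symmetric])
  then show ?thesis ..
qed

lemma previous_visit_next_unique:
  "previous_visit Zs p t \<Longrightarrow> previous_visit Zs p t' \<Longrightarrow> t = t'"
  unfolding previous_visit_def by (metis linorder_neqE_nat)

lemma card_first_visits_le:
  assumes "\<forall>t<T. Zs t \<in> Ctx" "finite Ctx"
  shows "card {t. t < T \<and> (\<forall>p. \<not> previous_visit Zs p t)} \<le> card Ctx"
proof (rule card_inj_on_le[OF _ _ assms(2)])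
  show "inj_on Zs {t. t < T \<and> (\<forall>p. \<not> previous_visit Zs p t)}"
  proof (rule inj_onI)
    fix a b assume "a \<in> {t. t < T \<and> (\<forall>p. \<not> previous_visit Zs p t)}"
      "b \<in> {t. t < T \<and> (\<forall>p. \<not> previous_visit Zs p t)}" "Zs a = Zs b"
    then show "a = b"
      using previous_visit_exists[of a b Zs] previous_visit_exists[of b a Zs]
      by (cases a b rule: linorder_cases) auto
  qed
  show "Zs ` {t. t < T \<and> (\<forall>p. \<not> previous_visit Zs p t)} \<subseteq> Ctx" using assms(1) by auto
qed

text \<open>Each mispredicted round spoils at most the next visit of its context.\<close>
lemma card_after_mispredicted_le:
  "card {t. t < T \<and> (\<exists>p. previous_visit Zs p t \<and> Zhat p \<noteq> Zs p)} \<le> card {t. t < T \<and> Zhat t \<noteq> Zs t}"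
proof -
  define M where "M = {t. t < T \<and> Zhat t \<noteq> Zs t}"
  define next_visit where "next_visit p = (THE t. previous_visit Zs p t)" for p
  have "{t. t < T \<and> (\<exists>p. previous_visit Zs p t \<and> Zhat p \<noteq> Zs p)} \<subseteq> next_visit ` M"
  proof
    fix t assume "t \<in> {t. t < T \<and> (\<exists>p. previous_visit Zs p t \<and> Zhat p \<noteq> Zs p)}"
    then obtain p where "t < T" "previous_visit Zs p t" "Zhat p \<noteq> Zs p" by auto
    moreover from this have "next_visit p = t"
      unfolding next_visit_def by (blast intro: the_equality previous_visit_next_unique)
    ultimately show "t \<in> next_visit ` M" by (force simp: M_def previous_visit_def)
  qed
  moreover have "finite M" by (simp add: M_def)
  ultimately show ?thesis
    using card_mono[OF finite_imageI] card_image_le[of M next_visit] unfolding M_def by (meson order_trans)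
qed

lemma card_unprepared_rounds_le:
  assumes "\<forall>t<T. Zs t \<in> Ctx" "finite Ctx"
  shows "card {t. t < T \<and> \<not> prepared_round Zs Zhat t} \<le> card Ctx + 2 * card {t. t < T \<and> Zhat t \<noteq> Zs t}"
proof -
  define M where "M = {t. t < T \<and> Zhat t \<noteq> Zs t}"
  define F where "F = {t. t < T \<and> (\<forall>p. \<not> previous_visit Zs p t)}"
  define N where "N = {t. t < T \<and> (\<exists>p. previous_visit Zs p t \<and> Zhat p \<noteq> Zs p)}"
  have "card {t. t < T \<and> \<not> prepared_round Zs Zhat t} \<le> card (M \<union> F \<union> N)"
    by (rule card_mono) (auto simp: M_def F_def N_def prepared_round_def)
  also have "\<dots> \<le> card M + card F + card N"
    using card_Un_le[of "M \<union> F" N] card_Un_le[of M F] by linarith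
  finally show ?thesis
    using card_first_visits_le[OF assms] card_after_mispredicted_le[of T Zs Zhat]
    by (simp add: M_def F_def N_def)
qed

section \<open>Regret\<close>

lemma ctx_regret_le_deviation_bound:
  assumes K: "K \<ge> 1"
    and gain: "\<And>\<pi>. \<forall>z\<in>Ctx. \<pi> z \<in> simplex K \<Longrightarrow>
      (\<Sum>t<T. exp_cost J K d \<phi> j (ws t) (Zs t))
        - (\<Sum>t<T. exp_cost J K d \<phi> j ((ws t)(j := \<pi> (Zs t))) (Zs t)) \<le> B"
  shows "ctx_regret J K d \<phi> Ctx Zs T ws j \<le> B"
proof -
  let ?S = "{(\<Sum>t<T. exp_cost J K d \<phi> j ((ws t)(j := \<pi> (Zs t))) (Zs t)) | \<pi>. \<forall>z\<in>Ctx. \<pi> z \<in> simplex K}"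
  define \<pi>\<^sub>0 :: "(nat \<Rightarrow> real) \<Rightarrow> nat \<Rightarrow> real" where "\<pi>\<^sub>0 = (\<lambda>z k. if k = 0 then 1 else 0)"
  have "\<forall>z\<in>Ctx. \<pi>\<^sub>0 z \<in> simplex K" using K by (simp add: simplex_def \<pi>\<^sub>0_def)
  then have "?S \<noteq> {}" by blast
  then have "(\<Sum>t<T. exp_cost J K d \<phi> j (ws t) (Zs t)) - B \<le> Inf ?S"
  proof (rule cInf_greatest)
    fix x assume "x \<in> ?S"
    then obtain \<pi> where \<pi>: "\<forall>z\<in>Ctx. \<pi> z \<in> simplex K"
      and x: "x = (\<Sum>t<T. exp_cost J K d \<phi> j ((ws t)(j := \<pi> (Zs t))) (Zs t))" by blast
    show "(\<Sum>t<T. exp_cost J K d \<phi> j (ws t) (Zs t)) - B \<le> x" using gain[OF \<pi>] x by linarith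
  qed
  then show ?thesis unfolding ctx_regret_def by linarith
qed

lemma sum_lessThan_if_const:
  "(\<Sum>t<(T::nat). if P t then c else 0) = c * real (card {t. t < T \<and> P t})"
  by (simp add: sum.inter_filter[symmetric] mult.commute)

lemma sum_eq_sum_over_contexts:
  assumes "finite Ctx" "\<forall>t<T. Zs t \<in> Ctx"
  shows "(\<Sum>t<T. f t) = (\<Sum>z\<in>Ctx. \<Sum>t<T. if Zs t = z then f t else 0)"
  by (subst sum.swap) (use assms in \<open>simp add: sum.delta'\<close>)

section \<open>Tuning the learning rate\<close>

text \<open>With \<open>X = a\<^sup>4\<close>, \<open>T = b\<^sup>4\<close>, \<open>J = s\<^sup>2\<close> and \<open>\<eta> = a / (2 s b)\<close>, every term of the regret bound
  is \<open>O(a\<^sup>3 b s)\<close>; the condition \<open>a \<le> b\<close> (that is, \<open>X \<le> T\<close>) controls the terms that do not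
  involve \<open>T\<close>.\<close>
lemma tuned_regret_bound_le:
  fixes a b s lnK L m T J \<eta> :: real
  assumes a: "0 < a" "a \<le> b" and s: "1 \<le> s" and lnK: "1/2 \<le> lnK" and L: "0 \<le> L" and m: "0 \<le> m"
    and X: "lnK * (L + m) = a ^ 4" and T: "T = b ^ 4" and J: "J = s\<^sup>2" and \<eta>: "\<eta> = a / (2 * s * b)"
  shows "m * (lnK / \<eta>) + \<eta> * (576 * \<eta>\<^sup>2 * J\<^sup>2 * T + 4 * (m + 2 * L)) + 2 * L \<le> 86 * (a ^ 3 * b * s)"
proof -
  have b: "0 < b" and s0: "0 < s" using a s by linarith+
  have a_le: "a \<le> b * s" using a(2) b mult_left_mono[of 1 s b] s by linarith
  have cube_nonneg: "0 \<le> a ^ 3" using a by simp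
  have "1 * (L + m) \<le> (2 * lnK) * (L + m)" using lnK L m by (intro mult_right_mono) auto
  then have Lm: "L + m \<le> 2 * a ^ 4" by (simp add: X[symmetric] mult.assoc)
  have "0 \<le> lnK * L" using lnK L by simp
  then have "m * lnK \<le> a ^ 4" using X[unfolded distrib_left] by (simp add: mult.commute)
  have "m * (lnK / \<eta>) = (m * lnK) * (2 * s * b / a)" using a b s0 by (simp add: \<eta> field_simps)
  also have "\<dots> \<le> a ^ 4 * (2 * s * b / a)"
    using \<open>m * lnK \<le> a ^ 4\<close> a b s0 by (intro mult_right_mono) auto
  also have "\<dots> = 2 * (a ^ 3 * b * s)" using a by (simp add: field_simps power_numeral_reduce)
  finally have t1: "m * (lnK / \<eta>) \<le> 2 * (a ^ 3 * b * s)" .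
  have t2: "\<eta> * (576 * \<eta>\<^sup>2 * J\<^sup>2 * T) = 72 * (a ^ 3 * b * s)"
    using a b s0 by (simp add: \<eta> J T field_simps power2_eq_square power3_eq_cube power4_eq_xxxx)
  have "\<eta> * (4 * (m + 2 * L)) \<le> \<eta> * (16 * a ^ 4)"
    using Lm L m a b s0 by (intro mult_left_mono) (auto simp: \<eta>)
  also have "\<dots> = 8 * (a ^ 3 * (a * a / (b * s)))" using b s0 by (simp add: \<eta> field_simps power_numeral_reduce)
  also have "\<dots> \<le> 8 * (a ^ 3 * (b * s))"
  proof -
    have "a * a \<le> (b * s) * (b * s)" using a a_le by (intro mult_mono) auto
    then have "a * a / (b * s) \<le> b * s" using b s0 by (simp add: divide_le_eq)
    then show ?thesis using cube_nonneg by (intro mult_left_mono) auto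
  qed
  finally have t3: "\<eta> * (4 * (m + 2 * L)) \<le> 8 * (a ^ 3 * b * s)" by (simp add: mult.assoc)
  have "a ^ 4 \<le> a ^ 3 * (b * s)" using a_le cube_nonneg mult_left_mono[of a "b * s" "a ^ 3"]
    by (simp add: power_numeral_reduce mult.commute)
  then have t4: "2 * L \<le> 4 * (a ^ 3 * b * s)" using Lm m by (simp only: mult.assoc)
  show ?thesis
    using t1 t2 t3 t4 distrib_left[of \<eta> "576 * \<eta>\<^sup>2 * J\<^sup>2 * T" "4 * (m + 2 * L)"] by linarith
qed

lemma tuned_regret_bound_powr_le:
  fixes lnK L m T J X \<eta> :: real
  assumes X_def: "X = lnK * (L + m)"
    and \<eta>_def: "\<eta> = 1/2 * J powr (-1/2) * T powr (-1/4) * X powr (1/4)"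
    and lnK: "1/2 \<le> lnK" and L: "0 \<le> L" and m: "1 \<le> m" and XT: "X < T" and J: "1 \<le> J"
  shows "0 < \<eta>" and "\<eta> \<le> 1/2"
    and "m * (lnK / \<eta>) + \<eta> * (576 * \<eta>\<^sup>2 * J\<^sup>2 * T + 4 * (m + 2 * L)) + 2 * L
      \<le> 86 * (X powr (3/4) * T powr (1/4) * J powr (1/2))"
proof -
  define a where "a = X powr (1/4)"
  define b where "b = T powr (1/4)"
  define s where "s = J powr (1/2)"
  have X0: "0 < X" using lnK L m by (simp add: X_def)
  have a: "0 < a" "a \<le> b" using X0 XT by (auto simp: a_def b_def intro: powr_mono2)
  have b: "0 < b" using a by linarith
  have s: "1 \<le> s" using J by (simp add: s_def ge_one_powr_ge_zero)
  have \<eta>_eq: "\<eta> = a / (2 * s * b)"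
  proof -
    have minus: "(-1/2 :: real) = - (1/2)" "(-1/4 :: real) = - (1/4)" by simp_all
    show ?thesis
      unfolding \<eta>_def minus powr_minus a_def[symmetric] b_def[symmetric] s_def[symmetric]
      by (simp add: field_simps)
  qed
  show "0 < \<eta>" using a b s by (simp add: \<eta>_eq)
  have "a \<le> s * b" using a b mult_right_mono[of 1 s b] s by linarith
  then show "\<eta> \<le> 1/2" using b s by (simp add: \<eta>_eq field_simps)
  have "lnK * (L + m) = a ^ 4" "T = b ^ 4" "J = s\<^sup>2"
    using X0 XT J by (simp_all add: X_def[symmetric] a_def b_def s_def powr_power)
  moreover have "a ^ 3 = X powr (3/4)" using X0 by (simp add: a_def powr_power)
  then have "X powr (3/4) * T powr (1/4) * J powr (1/2) = a ^ 3 * b * s" by (simp add: b_def s_def)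
  ultimately show "m * (lnK / \<eta>) + \<eta> * (576 * \<eta>\<^sup>2 * J\<^sup>2 * T + 4 * (m + 2 * L)) + 2 * L
      \<le> 86 * (X powr (3/4) * T powr (1/4) * J powr (1/2))"
    using tuned_regret_bound_le[OF a s lnK L _ _ _ _ \<eta>_eq] m by simp
qed

lemma le_powr_interpolation:
  fixes T X J :: real
  assumes "0 \<le> T" "T \<le> X" "1 \<le> J"
  shows "T \<le> X powr (3/4) * T powr (1/4) * J powr (1/2)"
proof (cases "T = 0")
  case False
  have "T = T powr (3/4) * T powr (1/4)" using False assms(1) by (simp flip: powr_add)
  also have "\<dots> \<le> X powr (3/4) * T powr (1/4)"
    using assms by (intro mult_right_mono powr_mono2) auto
  also have "\<dots> \<le> X powr (3/4) * T powr (1/4) * J powr (1/2)"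
    using mult_left_mono[of 1 "J powr (1/2)" "X powr (3/4) * T powr (1/4)"] assms
    by (simp add: ge_one_powr_ge_zero)
  finally show ?thesis .
qed simp

section \<open>All agents playing POMWU\<close>

locale pomwu_game = bounded_costs J K d \<phi> Ctx
  for J K d :: nat and \<phi> :: "nat \<Rightarrow> (nat \<Rightarrow> nat) \<Rightarrow> nat \<Rightarrow> real" and Ctx :: "(nat \<Rightarrow> real) set" +
  fixes \<eta> :: real and Zh :: "nat \<Rightarrow> nat \<Rightarrow> nat \<Rightarrow> real" and Zs :: "nat \<Rightarrow> nat \<Rightarrow> real"
  assumes K_ge_1: "K \<ge> 1" and eta_nonneg: "\<eta> \<ge> 0" and finite_Ctx: "finite Ctx"
begin

definition weights :: "nat \<Rightarrow> nat \<Rightarrow> (nat \<Rightarrow> real) \<Rightarrow> nat \<Rightarrow> real" where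
  "weights t = fst (game_state J K d \<phi> \<eta> Zh Zs t)"

definition hints :: "nat \<Rightarrow> nat \<Rightarrow> (nat \<Rightarrow> real) \<Rightarrow> nat \<Rightarrow> nat \<Rightarrow> real" where
  "hints t = snd (game_state J K d \<phi> \<eta> Zh Zs t)"

definition play :: "nat \<Rightarrow> nat \<Rightarrow> nat \<Rightarrow> real" where
  "play t = game_play J K d \<phi> \<eta> Zh Zs t"

definition loss :: "nat \<Rightarrow> nat \<Rightarrow> nat \<Rightarrow> real" where
  "loss j t k = ip d (Phi J K \<phi> j (play t) k) (Zs t)"

definition hint :: "nat \<Rightarrow> nat \<Rightarrow> nat \<Rightarrow> real" where
  "hint j t k = ip d (hints t j (Zs t) k) (Zs t)"

definition hint_error :: "nat \<Rightarrow> nat \<Rightarrow> real" where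
  "hint_error j t = Max ((\<lambda>k. \<bar>loss j t k - hint j t k\<bar>) ` {..<K})"

definition informed_play :: "nat \<Rightarrow> nat \<Rightarrow> nat \<Rightarrow> real" where
  "informed_play j t = pomwu_play K d \<eta> (weights t j) (hints t j) (Zs t)"

lemma play_eq: "play t = (\<lambda>j. pomwu_play K d \<eta> (weights t j) (hints t j) (Zh j t))"
  by (simp add: play_def game_play_def weights_def hints_def case_prod_beta)

lemma weights_0: "weights 0 = (\<lambda>j z k. 1 / real K)"
  by (simp add: weights_def)

lemma hints_0: "hints 0 = (\<lambda>j z k l. 0)"
  by (simp add: hints_def)

lemma weights_Suc: "weights (Suc t) = (\<lambda>j z k.
    if z = Zs t then weights t j z k * exp (- \<eta> * ip d (Phi J K \<phi> j (play t) k) z) else weights t j z k)"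
  unfolding play_eq weights_def hints_def by (simp add: case_prod_beta Let_def)

lemma hints_Suc: "hints (Suc t) = (\<lambda>j z. if z = Zs t then Phi J K \<phi> j (play t) else hints t j z)"
  unfolding play_eq weights_def hints_def by (simp add: case_prod_beta Let_def)

lemma weights_pos: "weights t j z k > 0"
  using K_ge_1 by (induction t) (auto simp: weights_0 weights_Suc)

lemma play_in_simplex: "play t i \<in> simplex K"
  unfolding play_eq using weights_pos K_ge_1 by (intro pomwu_play_in_simplex) auto

lemma informed_play_in_simplex: "informed_play j t \<in> simplex K"
  unfolding informed_play_def using weights_pos K_ge_1 by (intro pomwu_play_in_simplex) auto

lemma abs_ip_hints_le_1: "j < J \<Longrightarrow> z \<in> Ctx \<Longrightarrow> k < K \<Longrightarrow> \<bar>ip d (hints t j z k) z\<bar> \<le> 1"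
  by (induction t) (auto simp: hints_0 hints_Suc ip_def[of d "\<lambda>l. 0"] abs_ip_Phi_le_1 play_in_simplex)

lemma abs_loss_le_1: "j < J \<Longrightarrow> k < K \<Longrightarrow> Zs t \<in> Ctx \<Longrightarrow> \<bar>loss j t k\<bar> \<le> 1"
  unfolding loss_def by (simp add: abs_ip_Phi_le_1 play_in_simplex)

lemma abs_hint_le_1: "j < J \<Longrightarrow> k < K \<Longrightarrow> Zs t \<in> Ctx \<Longrightarrow> \<bar>hint j t k\<bar> \<le> 1"
  unfolding hint_def by (rule abs_ip_hints_le_1)

lemma hint_error_ge: "k < K \<Longrightarrow> \<bar>loss j t k - hint j t k\<bar> \<le> hint_error j t"
  unfolding hint_error_def by (rule Max_ge) auto

lemma hint_error_nonneg: "0 \<le> hint_error j t"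
  using hint_error_ge[of 0 j t] K_ge_1 by linarith

lemma hint_error_le_2:
  assumes "j < J" "Zs t \<in> Ctx"
  shows "hint_error j t \<le> 2"
proof -
  have "\<bar>loss j t k - hint j t k\<bar> \<le> 2" if "k < K" for k
    using abs_loss_le_1[OF assms(1) that assms(2)] abs_hint_le_1[OF assms(1) that assms(2)] by linarith
  then show ?thesis
    unfolding hint_error_def using K_ge_1 by (subst Max_le_iff) (auto simp: lessThan_empty_iff)
qed

lemma informed_play_eq_softmax:
  "k < K \<Longrightarrow> informed_play j t k = softmax K (weights t j (Zs t)) (\<lambda>i. \<eta> * hint j t i) k"
  by (simp add: informed_play_def pomwu_play_eq_softmax hint_def)

lemma weights_eq:
  "weights t j z k = exp (- \<eta> * (\<Sum>s<t. if Zs s = z then loss j s k else 0)) / real K"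
proof (induction t)
  case (Suc t)
  then show ?case
    by (cases "z = Zs t") (simp_all add: weights_Suc loss_def algebra_simps flip: exp_add)
qed (simp add: weights_0)

lemma ln_sum_weights_Suc_le:
  assumes j: "j < J" and z: "Zs t \<in> Ctx" and \<eta>: "\<eta> \<le> 1/2"
  shows "ln (\<Sum>k<K. weights (Suc t) j (Zs t) k) \<le> ln (\<Sum>k<K. weights t j (Zs t) k)
    - \<eta> * (\<Sum>k<K. informed_play j t k * loss j t k) + \<eta>\<^sup>2 * (hint_error j t)\<^sup>2"
proof -
  have "\<eta> * hint_error j t \<le> 1"
    using mult_left_mono[OF hint_error_le_2[OF j z] eta_nonneg] \<eta> by linarith
  then have "ln (\<Sum>k<K. weights t j (Zs t) k * exp (- \<eta> * loss j t k)) \<le> ln (\<Sum>k<K. weights t j (Zs t) k)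
    - \<eta> * (\<Sum>k<K. softmax K (weights t j (Zs t)) (\<lambda>i. \<eta> * hint j t i) k * loss j t k)
    + \<eta>\<^sup>2 * (hint_error j t)\<^sup>2"
    by (intro ln_sum_weights_step_le K_ge_1) (auto simp: weights_pos hint_error_ge eta_nonneg)
  then show ?thesis by (simp add: weights_Suc loss_def informed_play_eq_softmax)
qed

lemma ln_sum_weights_le:
  assumes j: "j < J" and ctx: "\<forall>t<T. Zs t \<in> Ctx" and \<eta>: "\<eta> \<le> 1/2"
  shows "ln (\<Sum>k<K. weights T j z k) \<le> (\<Sum>t<T. if Zs t = z then
    - \<eta> * (\<Sum>k<K. informed_play j t k * loss j t k) + \<eta>\<^sup>2 * (hint_error j t)\<^sup>2 else 0)"
  using ctx
proof (induction T)
  case 0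
  then show ?case using K_ge_1 by (simp add: weights_0)
next
  case (Suc T)
  show ?case
  proof (cases "Zs T = z")
    case True
    then show ?thesis using Suc ln_sum_weights_Suc_le[OF j _ \<eta>, of T] by auto
  next
    case False
    then show ?thesis using Suc by (simp add: weights_Suc)
  qed
qed

lemma ln_sum_weights_ge:
  assumes \<pi>: "\<pi> \<in> simplex K"
  shows "- ln (real K) - \<eta> * (\<Sum>t<T. if Zs t = z then \<Sum>k<K. \<pi> k * loss j t k else 0)
    \<le> ln (\<Sum>k<K. weights T j z k)"
proof -
  define L where "L k = (\<Sum>t<T. if Zs t = z then loss j t k else 0)" for k
  have "- ln (real K) - \<eta> * L k \<le> ln (\<Sum>i<K. weights T j z i)" if k: "k < K" for k
  proof -
    have "- ln (real K) - \<eta> * L k = ln (weights T j z k)"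
      using K_ge_1 by (simp add: weights_eq L_def ln_div)
    also have "\<dots> \<le> ln (\<Sum>i<K. weights T j z i)"
      using k weights_pos by (intro ln_mono member_le_sum less_imp_le) auto
    finally show ?thesis .
  qed
  then have "(\<Sum>k<K. \<pi> k * (- ln (real K) - \<eta> * L k)) \<le> (\<Sum>k<K. \<pi> k * ln (\<Sum>i<K. weights T j z i))"
    using \<pi> by (intro sum_mono mult_left_mono) (auto simp: simplex_def)
  moreover have "(\<Sum>k<K. \<pi> k * L k) = (\<Sum>t<T. if Zs t = z then \<Sum>k<K. \<pi> k * loss j t k else 0)"
    unfolding L_def sum_distrib_left by (subst sum.swap) (intro sum.cong refl, simp split: if_split)
  moreover have "(\<Sum>k<K. \<pi> k * (- ln (real K) - \<eta> * L k))
      = (\<Sum>k<K. \<pi> k) * (- ln (real K)) - \<eta> * (\<Sum>k<K. \<pi> k * L k)"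
    by (simp add: algebra_simps sum_subtractf sum_distrib_left sum_distrib_right)
  moreover have "(\<Sum>k<K. \<pi> k) = 1" using \<pi> by (simp add: simplex_def)
  ultimately show ?thesis by (simp flip: sum_distrib_right)
qed

lemma informed_regret_on_context_le:
  assumes j: "j < J" and ctx: "\<forall>t<T. Zs t \<in> Ctx" and \<eta>: "0 < \<eta>" "\<eta> \<le> 1/2"
    and \<pi>: "\<pi> \<in> simplex K"
  shows "(\<Sum>t<T. if Zs t = z then (\<Sum>k<K. informed_play j t k * loss j t k) - (\<Sum>k<K. \<pi> k * loss j t k) else 0)
    \<le> ln (real K) / \<eta> + \<eta> * (\<Sum>t<T. if Zs t = z then (hint_error j t)\<^sup>2 else 0)"
proof -
  define A where "A = (\<Sum>t<T. if Zs t = z then \<Sum>k<K. informed_play j t k * loss j t k else 0)"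
  define B where "B = (\<Sum>t<T. if Zs t = z then \<Sum>k<K. \<pi> k * loss j t k else 0)"
  define D where "D = (\<Sum>t<T. if Zs t = z then (hint_error j t)\<^sup>2 else 0)"
  have "(\<Sum>t<T. if Zs t = z then - \<eta> * (\<Sum>k<K. informed_play j t k * loss j t k) + \<eta>\<^sup>2 * (hint_error j t)\<^sup>2 else 0)
      = (\<Sum>t<T. - \<eta> * (if Zs t = z then \<Sum>k<K. informed_play j t k * loss j t k else 0)
          + \<eta>\<^sup>2 * (if Zs t = z then (hint_error j t)\<^sup>2 else 0))"
    by (intro sum.cong) auto
  also have "\<dots> = - \<eta> * A + \<eta>\<^sup>2 * D"
    by (simp add: A_def D_def sum.distrib sum_subtractf sum_negf sum_distrib_left)
  finally have "ln (\<Sum>k<K. weights T j z k) \<le> - \<eta> * A + \<eta>\<^sup>2 * D"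
    using ln_sum_weights_le[OF j ctx \<eta>(2), of z] by simp
  then have "- ln (real K) - \<eta> * B \<le> - \<eta> * A + \<eta>\<^sup>2 * D"
    using ln_sum_weights_ge[OF \<pi>, where T = T and z = z and j = j] by (simp add: B_def)
  then have "A - B \<le> ln (real K) / \<eta> + \<eta> * D"
    using \<eta>(1) by (simp add: field_simps power2_eq_square)
  moreover have "A - B = (\<Sum>t<T. if Zs t = z then
      (\<Sum>k<K. informed_play j t k * loss j t k) - (\<Sum>k<K. \<pi> k * loss j t k) else 0)"
    unfolding A_def B_def by (subst sum_subtractf[symmetric]) (intro sum.cong refl, simp)
  ultimately show ?thesis by (simp add: D_def)
qed

lemma informed_regret_le:
  assumes j: "j < J" and ctx: "\<forall>t<T. Zs t \<in> Ctx" and \<eta>: "0 < \<eta>" "\<eta> \<le> 1/2"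
    and \<pi>: "\<forall>z\<in>Ctx. \<pi> z \<in> simplex K"
  shows "(\<Sum>t<T. (\<Sum>k<K. informed_play j t k * loss j t k) - (\<Sum>k<K. \<pi> (Zs t) k * loss j t k))
    \<le> real (card Ctx) * (ln (real K) / \<eta>) + \<eta> * (\<Sum>t<T. (hint_error j t)\<^sup>2)"
proof -
  define g where "g t = (\<Sum>k<K. informed_play j t k * loss j t k) - (\<Sum>k<K. \<pi> (Zs t) k * loss j t k)" for t
  have "(\<Sum>t<T. g t) = (\<Sum>z\<in>Ctx. \<Sum>t<T. if Zs t = z then g t else 0)"
    by (rule sum_eq_sum_over_contexts[OF finite_Ctx ctx])
  also have "\<dots> \<le> (\<Sum>z\<in>Ctx. ln (real K) / \<eta> + \<eta> * (\<Sum>t<T. if Zs t = z then (hint_error j t)\<^sup>2 else 0))"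
  proof (rule sum_mono)
    fix z assume "z \<in> Ctx"
    have "(\<Sum>t<T. if Zs t = z then g t else 0) = (\<Sum>t<T. if Zs t = z then
        (\<Sum>k<K. informed_play j t k * loss j t k) - (\<Sum>k<K. \<pi> z k * loss j t k) else 0)"
      by (intro sum.cong) (auto simp: g_def)
    also have "\<dots> \<le> ln (real K) / \<eta> + \<eta> * (\<Sum>t<T. if Zs t = z then (hint_error j t)\<^sup>2 else 0)"
      using \<pi> \<open>z \<in> Ctx\<close> by (intro informed_regret_on_context_le[OF j ctx \<eta>]) simp
    finally show "(\<Sum>t<T. if Zs t = z then g t else 0)
      \<le> ln (real K) / \<eta> + \<eta> * (\<Sum>t<T. if Zs t = z then (hint_error j t)\<^sup>2 else 0)" .
  qed
  also have "\<dots> = real (card Ctx) * (ln (real K) / \<eta>)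
      + \<eta> * (\<Sum>z\<in>Ctx. \<Sum>t<T. if Zs t = z then (hint_error j t)\<^sup>2 else 0)"
    by (simp add: sum.distrib sum_distrib_left)
  also have "(\<Sum>z\<in>Ctx. \<Sum>t<T. if Zs t = z then (hint_error j t)\<^sup>2 else 0) = (\<Sum>t<T. (hint_error j t)\<^sup>2)"
    by (rule sum_eq_sum_over_contexts[OF finite_Ctx ctx, symmetric])
  finally show ?thesis by (simp add: g_def)
qed

lemma state_unchanged_between_visits:
  assumes "p < t" "\<forall>s. p < s \<and> s < t \<longrightarrow> Zs s \<noteq> z"
  shows "weights t i z = weights (Suc p) i z \<and> hints t i z = hints (Suc p) i z"
  using assms
proof (induction t)
  case (Suc t)
  then show ?case
    by (cases "p < t") (auto simp: weights_Suc hints_Suc less_Suc_eq)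
qed simp

text \<open>Between two consecutive visits of a context its weights and hint are updated once, by
  the loss vector of the earlier visit; hence at the later visit the agent plays the Gibbs
  distribution of that loss counted twice.\<close>
lemma play_at_revisit:
  assumes prev: "previous_visit Zs p t" and pred: "Zh i t = Zs t" "Zh i p = Zs p" and k: "k < K"
  shows "play t i k = softmax K (weights p i (Zs t)) (\<lambda>k. 2 * \<eta> * loss i p k) k"
    and "play p i k = softmax K (weights p i (Zs t)) (\<lambda>k. \<eta> * hint i p k) k"
proof -
  define z where "z = Zs t"
  have zp: "Zs p = z" using prev by (simp add: previous_visit_def z_def)
  have state: "weights t i z = weights (Suc p) i z" "hints t i z = hints (Suc p) i z"
    using state_unchanged_between_visits[of p t z i] prev by (auto simp: previous_visit_def z_def)
  have "play t i k = softmax K (weights (Suc p) i z) (\<lambda>k. \<eta> * loss i p k) k"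
    using pred(1) k state zp by (simp add: play_eq pomwu_play_eq_softmax hints_Suc loss_def z_def)
  also have "\<dots> = softmax K (weights p i z) (\<lambda>k. 2 * \<eta> * loss i p k) k"
    using zp by (simp add: weights_Suc loss_def softmax_mult_exp algebra_simps cong: if_cong)
  finally show "play t i k = softmax K (weights p i (Zs t)) (\<lambda>k. 2 * \<eta> * loss i p k) k"
    by (simp add: z_def)
  show "play p i k = softmax K (weights p i (Zs t)) (\<lambda>k. \<eta> * hint i p k) k"
    using pred(2) k zp by (simp add: play_eq pomwu_play_eq_softmax hint_def z_def)
qed

lemma play_ratio_at_revisit:
  assumes prev: "previous_visit Zs p t" and z: "Zs t \<in> Ctx"
    and pred: "Zh i t = Zs t" "Zh i p = Zs p" and i: "i < J" and k: "k < K"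
  shows "play t i k \<le> exp (6 * \<eta>) * play p i k" and "play p i k \<le> exp (6 * \<eta>) * play t i k"
proof -
  have zp: "Zs p \<in> Ctx" using prev z by (simp add: previous_visit_def)
  have close: "\<bar>2 * \<eta> * loss i p k' - \<eta> * hint i p k'\<bar> \<le> 3 * \<eta>" if "k' < K" for k'
  proof -
    have "\<bar>loss i p k'\<bar> \<le> 1" "\<bar>hint i p k'\<bar> \<le> 1"
      using abs_loss_le_1 abs_hint_le_1 i that zp by auto
    then have "\<bar>2 * \<eta> * loss i p k'\<bar> \<le> 2 * \<eta>" "\<bar>\<eta> * hint i p k'\<bar> \<le> \<eta>"
      using eta_nonneg by (simp_all add: abs_mult mult_left_le)
    then show ?thesis by linarith
  qed
  let ?\<rho> = "weights p i (Zs t)"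
  show "play t i k \<le> exp (6 * \<eta>) * play p i k"
    unfolding play_at_revisit[OF prev pred k]
    using softmax_le_exp_mult[OF K_ge_1 _ _ k, of ?\<rho> "\<lambda>k. 2 * \<eta> * loss i p k" "\<lambda>k. \<eta> * hint i p k" "3 * \<eta>"]
      close weights_pos by simp
  show "play p i k \<le> exp (6 * \<eta>) * play t i k"
    unfolding play_at_revisit[OF prev pred k]
    using softmax_le_exp_mult[OF K_ge_1 _ _ k, of ?\<rho> "\<lambda>k. \<eta> * hint i p k" "\<lambda>k. 2 * \<eta> * loss i p k" "3 * \<eta>"]
      close weights_pos by (simp add: abs_minus_commute)
qed

lemma hint_error_sq_le_prepared:
  assumes j: "j < J" and prepared: "prepared_round Zs Zhat t" and z: "Zs t \<in> Ctx"
    and pred: "\<forall>s\<le>t. \<forall>i<J. Zh i s = Zhat s"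
  shows "(hint_error j t)\<^sup>2 \<le> 576 * \<eta>\<^sup>2 * (real J)\<^sup>2"
proof -
  obtain p where prev: "previous_visit Zs p t" and "Zhat p = Zs p" "Zhat t = Zs t"
    using prepared by (auto simp: prepared_round_def)
  then have pred': "Zh i t = Zs t" "Zh i p = Zs p" if "i < J" for i
    using pred that by (auto simp: previous_visit_def)
  have "\<bar>loss j t k - hint j t k\<bar> \<le> 2 * (exp (6 * \<eta> * real J) - 1)" if k: "k < K" for k
  proof -
    have "hint j t k = ip d (Phi J K \<phi> j (play p) k) (Zs t)"
      using state_unchanged_between_visits[of p t "Zs t" j] prev
      by (auto simp: hint_def hints_Suc previous_visit_def)
    then show ?thesis
      unfolding loss_def
      using abs_ip_Phi_diff_le[OF j k z, of "6 * \<eta>" "play t" "play p"] eta_nonneg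
        play_in_simplex play_ratio_at_revisit[OF prev z pred'] k
      by (auto simp: mult.assoc)
  qed
  then have "hint_error j t \<le> 2 * (exp (6 * \<eta> * real J) - 1)"
    unfolding hint_error_def using K_ge_1 by (subst Max_le_iff) (auto simp: lessThan_empty_iff)
  then have "(hint_error j t)\<^sup>2 \<le> 16 * (6 * \<eta> * real J)\<^sup>2"
    using eta_nonneg hint_error_nonneg hint_error_le_2[OF j z]
    by (intro sq_le_of_le_double_exp_minus_one) auto
  then show ?thesis by (simp add: power_mult_distrib)
qed

lemma exp_cost_deviation:
  "j < J \<Longrightarrow> exp_cost J K d \<phi> j ((play t)(j := w)) (Zs t) = (\<Sum>k<K. w k * loss j t k)"
  by (simp add: exp_cost_fun_upd loss_def)

lemma exp_cost_play:
  "j < J \<Longrightarrow> exp_cost J K d \<phi> j (play t) (Zs t) = (\<Sum>k<K. play t j k * loss j t k)"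
  using exp_cost_deviation[of j t "play t j"] by simp

lemma sum_hint_error_sq_le:
  assumes j: "j < J" and ctx: "\<forall>t<T. Zs t \<in> Ctx" and pred: "\<forall>t<T. \<forall>i<J. Zh i t = Zhat t"
  shows "(\<Sum>t<T. (hint_error j t)\<^sup>2) \<le> 576 * \<eta>\<^sup>2 * (real J)\<^sup>2 * real T
    + 4 * (real (card Ctx) + 2 * real (card {t. t < T \<and> Zhat t \<noteq> Zs t}))"
proof -
  have "(hint_error j t)\<^sup>2 \<le> 576 * \<eta>\<^sup>2 * (real J)\<^sup>2 + (if \<not> prepared_round Zs Zhat t then 4 else 0)"
    if t: "t < T" for t
  proof (cases "prepared_round Zs Zhat t")
    case True
    then show ?thesis using hint_error_sq_le_prepared[OF j True] ctx pred t by auto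
  next
    case False
    have "(hint_error j t)\<^sup>2 \<le> 2\<^sup>2"
      using hint_error_le_2[OF j] hint_error_nonneg ctx t by (intro power_mono) auto
    then show ?thesis using False by (simp add: add_increasing)
  qed
  then have "(\<Sum>t<T. (hint_error j t)\<^sup>2)
      \<le> (\<Sum>t<T. 576 * \<eta>\<^sup>2 * (real J)\<^sup>2 + (if \<not> prepared_round Zs Zhat t then 4 else 0))"
    by (intro sum_mono) auto
  also have "\<dots> = 576 * \<eta>\<^sup>2 * (real J)\<^sup>2 * real T
      + 4 * real (card {t. t < T \<and> \<not> prepared_round Zs Zhat t})"
    by (simp add: sum.distrib sum_lessThan_if_const)
  also have "\<dots> \<le> 576 * \<eta>\<^sup>2 * (real J)\<^sup>2 * real T
      + 4 * (real (card Ctx) + 2 * real (card {t. t < T \<and> Zhat t \<noteq> Zs t}))"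
    using of_nat_mono[OF card_unprepared_rounds_le[OF ctx finite_Ctx, of Zhat], where 'a = real] by simp
  finally show ?thesis .
qed

lemma sum_exp_cost_play_le:
  assumes j: "j < J" and ctx: "\<forall>t<T. Zs t \<in> Ctx" and pred: "\<forall>t<T. \<forall>i<J. Zh i t = Zhat t"
  shows "(\<Sum>t<T. exp_cost J K d \<phi> j (play t) (Zs t))
    \<le> (\<Sum>t<T. \<Sum>k<K. informed_play j t k * loss j t k) + 2 * real (card {t. t < T \<and> Zhat t \<noteq> Zs t})"
proof -
  have "exp_cost J K d \<phi> j (play t) (Zs t)
      \<le> (\<Sum>k<K. informed_play j t k * loss j t k) + (if Zhat t \<noteq> Zs t then 2 else 0)"
    if t: "t < T" for t
  proof (cases "Zhat t = Zs t")
    case True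
    then have "play t j = informed_play j t" using pred j t by (simp add: play_eq informed_play_def)
    then show ?thesis using True by (simp add: exp_cost_play[OF j])
  next
    case False
    have "\<forall>k<K. \<bar>loss j t k\<bar> \<le> 1" using abs_loss_le_1 j ctx t by auto
    then have "\<bar>\<Sum>k<K. play t j k * loss j t k\<bar> \<le> 1" "\<bar>\<Sum>k<K. informed_play j t k * loss j t k\<bar> \<le> 1"
      using abs_sum_simplex_le_1 play_in_simplex informed_play_in_simplex by auto
    then show ?thesis using False by (simp add: exp_cost_play[OF j])
  qed
  then have "(\<Sum>t<T. exp_cost J K d \<phi> j (play t) (Zs t))
      \<le> (\<Sum>t<T. (\<Sum>k<K. informed_play j t k * loss j t k) + (if Zhat t \<noteq> Zs t then 2 else 0))"
    by (intro sum_mono) auto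
  then show ?thesis by (simp add: sum.distrib sum_lessThan_if_const)
qed

lemma deviation_gain_le:
  fixes Zhat :: "nat \<Rightarrow> nat \<Rightarrow> real" and T :: nat
  defines "L \<equiv> real (card {t. t < T \<and> Zhat t \<noteq> Zs t})"
  assumes j: "j < J" and ctx: "\<forall>t<T. Zs t \<in> Ctx" and pred: "\<forall>t<T. \<forall>i<J. Zh i t = Zhat t"
    and \<eta>: "0 < \<eta>" "\<eta> \<le> 1/2" and \<pi>: "\<forall>z\<in>Ctx. \<pi> z \<in> simplex K"
  shows "(\<Sum>t<T. exp_cost J K d \<phi> j (play t) (Zs t))
      - (\<Sum>t<T. exp_cost J K d \<phi> j ((play t)(j := \<pi> (Zs t))) (Zs t))
    \<le> real (card Ctx) * (ln (real K) / \<eta>)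
      + \<eta> * (576 * \<eta>\<^sup>2 * (real J)\<^sup>2 * real T + 4 * (real (card Ctx) + 2 * L)) + 2 * L"
proof -
  have "\<eta> * (\<Sum>t<T. (hint_error j t)\<^sup>2)
      \<le> \<eta> * (576 * \<eta>\<^sup>2 * (real J)\<^sup>2 * real T + 4 * (real (card Ctx) + 2 * L))"
    using sum_hint_error_sq_le[OF j ctx pred] \<eta>(1) unfolding L_def by (intro mult_left_mono) auto
  then show ?thesis
    using sum_exp_cost_play_le[OF j ctx pred] informed_regret_le[OF j ctx \<eta> \<pi>]
    by (simp add: exp_cost_deviation[OF j] sum_subtractf L_def)
qed

lemma ctx_regret_le_trivial:
  assumes j: "j < J" and ctx: "\<forall>t<T. Zs t \<in> Ctx"
  shows "ctx_regret J K d \<phi> Ctx Zs T play j \<le> 2 * real T"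
proof (rule ctx_regret_le_deviation_bound[OF K_ge_1])
  fix \<pi> :: "(nat \<Rightarrow> real) \<Rightarrow> nat \<Rightarrow> real" assume \<pi>: "\<forall>z\<in>Ctx. \<pi> z \<in> simplex K"
  have "exp_cost J K d \<phi> j (play t) (Zs t) - exp_cost J K d \<phi> j ((play t)(j := \<pi> (Zs t))) (Zs t) \<le> 2"
    if t: "t < T" for t
  proof -
    have "\<forall>k<K. \<bar>loss j t k\<bar> \<le> 1" using abs_loss_le_1 j ctx t by auto
    then have "\<bar>\<Sum>k<K. play t j k * loss j t k\<bar> \<le> 1" "\<bar>\<Sum>k<K. \<pi> (Zs t) k * loss j t k\<bar> \<le> 1"
      using abs_sum_simplex_le_1 play_in_simplex \<pi> ctx t by auto
    then show ?thesis by (simp add: exp_cost_play[OF j] exp_cost_deviation[OF j])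
  qed
  then have "(\<Sum>t<T. exp_cost J K d \<phi> j (play t) (Zs t) - exp_cost J K d \<phi> j ((play t)(j := \<pi> (Zs t))) (Zs t))
      \<le> (\<Sum>t<T. 2)"
    by (intro sum_mono) auto
  then show "(\<Sum>t<T. exp_cost J K d \<phi> j (play t) (Zs t))
      - (\<Sum>t<T. exp_cost J K d \<phi> j ((play t)(j := \<pi> (Zs t))) (Zs t)) \<le> 2 * real T"
    by (simp add: sum_subtractf)
qed

lemma ctx_regret_le_single_action:
  assumes j: "j < J" and ctx: "\<forall>t<T. Zs t \<in> Ctx" and K: "K = 1"
  shows "ctx_regret J K d \<phi> Ctx Zs T play j \<le> 0"
proof (rule ctx_regret_le_deviation_bound[OF K_ge_1])
  fix \<pi> :: "(nat \<Rightarrow> real) \<Rightarrow> nat \<Rightarrow> real" assume \<pi>: "\<forall>z\<in>Ctx. \<pi> z \<in> simplex K"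
  have "exp_cost J K d \<phi> j (play t) (Zs t) = exp_cost J K d \<phi> j ((play t)(j := \<pi> (Zs t))) (Zs t)"
    if t: "t < T" for t
  proof -
    have "play t j 0 = 1" "\<pi> (Zs t) 0 = 1"
      using play_in_simplex[of t j] \<pi> ctx t K by (auto simp: simplex_def)
    then have "(\<Sum>k<K. play t j k * loss j t k) = (\<Sum>k<K. \<pi> (Zs t) k * loss j t k)"
      using K by simp
    then show ?thesis by (simp only: exp_cost_play[OF j] exp_cost_deviation[OF j])
  qed
  then show "(\<Sum>t<T. exp_cost J K d \<phi> j (play t) (Zs t))
      - (\<Sum>t<T. exp_cost J K d \<phi> j ((play t)(j := \<pi> (Zs t))) (Zs t)) \<le> 0"
    by simp
qed

lemma ctx_regret_le_optimistic:
  fixes Zhat :: "nat \<Rightarrow> nat \<Rightarrow> real" and T :: nat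
  defines "L \<equiv> real (card {t. t < T \<and> Zhat t \<noteq> Zs t})"
  assumes j: "j < J" and ctx: "\<forall>t<T. Zs t \<in> Ctx" and pred: "\<forall>t<T. \<forall>i<J. Zh i t = Zhat t"
    and \<eta>: "0 < \<eta>" "\<eta> \<le> 1/2"
  shows "ctx_regret J K d \<phi> Ctx Zs T play j \<le> real (card Ctx) * (ln (real K) / \<eta>)
      + \<eta> * (576 * \<eta>\<^sup>2 * (real J)\<^sup>2 * real T + 4 * (real (card Ctx) + 2 * L)) + 2 * L"
  unfolding L_def by (rule ctx_regret_le_deviation_bound[OF K_ge_1 deviation_gain_le[OF j ctx pred \<eta>]])

lemma ctx_regret_le_tuned:
  fixes Zhat :: "nat \<Rightarrow> nat \<Rightarrow> real" and T :: nat
  defines "X \<equiv> ln (real K) * (real (card {t. t < T \<and> Zhat t \<noteq> Zs t}) + real (card Ctx))"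
  assumes J: "J \<ge> 2" and j: "j < J" and hz: "\<forall>t<T. Zs t \<in> Ctx \<and> (\<forall>i<J. Zh i t = Zhat t)"
    and \<eta>: "\<eta> = 1/2 * real J powr (-1/2) * real T powr (-1/4) * X powr (1/4)"
  shows "ctx_regret J K d \<phi> Ctx Zs T play j \<le> 100 * (X powr (3/4) * real T powr (1/4) * real J powr (1/2))"
proof -
  define R where "R = X powr (3/4) * real T powr (1/4) * real J powr (1/2)"
  have R: "0 \<le> R" by (simp add: R_def)
  have ctx: "\<forall>t<T. Zs t \<in> Ctx" and pred: "\<forall>t<T. \<forall>i<J. Zh i t = Zhat t" using hz by auto
  consider "K = 1" | "K \<ge> 2" "real T \<le> X" | "K \<ge> 2" "X < real T" using K_ge_1 by linarith
  then have "ctx_regret J K d \<phi> Ctx Zs T play j \<le> 100 * R"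
  proof cases
    case 1
    then show ?thesis using ctx_regret_le_single_action[OF j ctx] R by linarith
  next
    case 2
    have "real T \<le> R" unfolding R_def using 2 J by (intro le_powr_interpolation) auto
    then show ?thesis using ctx_regret_le_trivial[OF j ctx] R by linarith
  next
    case 3
    have lnK: "1/2 \<le> ln (real K)" using 3 exp_half_le2 by (subst ln_ge_iff) auto
    have "0 \<le> X" using K_ge_1 by (simp add: X_def)
    then have "Zs 0 \<in> Ctx" using 3 ctx by simp
    then have m: "1 \<le> real (card Ctx)" using finite_Ctx by (auto simp: Suc_le_eq card_gt_0_iff)
    note tuned = tuned_regret_bound_powr_le[OF X_def[THEN meta_eq_to_obj_eq] \<eta> lnK _ m 3(2)]
    have "ctx_regret J K d \<phi> Ctx Zs T play j \<le> 86 * R"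
      using ctx_regret_le_optimistic[OF j ctx pred tuned(1,2)] tuned(3) J by (simp add: R_def)
    then show ?thesis using R by linarith
  qed
  then show ?thesis by (simp add: R_def)
qed

end

theorem proposition9:
  shows "\<exists>c>0. \<exists>C. \<forall>(J::nat) (K::nat) (d::nat) (\<phi> :: nat \<Rightarrow> (nat \<Rightarrow> nat) \<Rightarrow> nat \<Rightarrow> real)
      (Ctx :: (nat \<Rightarrow> real) set) (Zs :: nat \<Rightarrow> nat \<Rightarrow> real) (Zh :: nat \<Rightarrow> nat \<Rightarrow> nat \<Rightarrow> real)
      (Zhat :: nat \<Rightarrow> nat \<Rightarrow> real) (T::nat).
     J \<ge> 2 \<longrightarrow> K \<ge> 1 \<longrightarrow> finite Ctx \<longrightarrow>
     (\<forall>z\<in>Ctx. \<forall>l\<ge>d. z l = 0) \<longrightarrow>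
     (\<forall>j<J. \<forall>a\<in>joint_actions J K. \<forall>z\<in>Ctx. \<bar>ip d z (\<phi> j a)\<bar> \<le> 1) \<longrightarrow>
     (\<forall>t<T. Zs t \<in> Ctx \<and> Zhat t \<in> Ctx \<and> (\<forall>j<J. Zh j t = Zhat t)) \<longrightarrow>
     (let L = real (card {t. t < T \<and> Zhat t \<noteq> Zs t});
          m = real (card Ctx);
          \<eta> = c * real J powr (-1/2) * real T powr (-1/4) * (ln (real K) * (L + m)) powr (1/4)
      in \<forall>j<J. ctx_regret J K d \<phi> Ctx Zs T (game_play J K d \<phi> \<eta> Zh Zs) j
               \<le> C * ((ln (real K) * (L + m)) powr (3/4) * real T powr (1/4) * real J powr (1/2)))"
proof (rule exI[of _ "1/2"], rule conjI, simp, rule exI[of _ 100],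
    intro allI impI, unfold Let_def, intro allI impI)
  fix J K d :: nat and \<phi> :: "nat \<Rightarrow> (nat \<Rightarrow> nat) \<Rightarrow> nat \<Rightarrow> real" and Ctx :: "(nat \<Rightarrow> real) set"
    and Zs :: "nat \<Rightarrow> nat \<Rightarrow> real" and Zh :: "nat \<Rightarrow> nat \<Rightarrow> nat \<Rightarrow> real" and Zhat :: "nat \<Rightarrow> nat \<Rightarrow> real"
    and T j :: nat
  assume J: "J \<ge> 2" and K: "K \<ge> 1" and fin: "finite Ctx" and "\<forall>z\<in>Ctx. \<forall>l\<ge>d. z l = 0"
    and bnd: "\<forall>j<J. \<forall>a\<in>joint_actions J K. \<forall>z\<in>Ctx. \<bar>ip d z (\<phi> j a)\<bar> \<le> 1"
    and hz: "\<forall>t<T. Zs t \<in> Ctx \<and> Zhat t \<in> Ctx \<and> (\<forall>j<J. Zh j t = Zhat t)" and j: "j < J"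
  let ?X = "ln (real K) * (real (card {t. t < T \<and> Zhat t \<noteq> Zs t}) + real (card Ctx))"
  let ?\<eta> = "1/2 * real J powr (-1/2) * real T powr (-1/4) * ?X powr (1/4)"
  interpret pomwu_game J K d \<phi> Ctx ?\<eta> Zh Zs
    by unfold_locales (use bnd K fin in simp_all)
  have "play = game_play J K d \<phi> ?\<eta> Zh Zs" by (rule ext, rule play_def)
  then show "ctx_regret J K d \<phi> Ctx Zs T (game_play J K d \<phi> ?\<eta> Zh Zs) j
      \<le> 100 * (?X powr (3/4) * real T powr (1/4) * real J powr (1/2))"
    using ctx_regret_le_tuned[OF J j _ refl] hz by simp
qed

end
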